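(* Let $f:\mathbb{R}^n\to\mathbb{R}^n$ be locally Lipschitz, and let $V_1,V_2\in C^1(\mathbb{R}^n)$, continuous $N_1,N_2:\mathbb{R}^n\to[0,\infty)$, and continuous $h:[0,\infty)\to[0,\infty)$ with $h(0)=0$ and $\sup_{r>0}h(r)/r<\infty$ satisfy $\nabla V_1\cdot f\le -N_1$ and $\nabla V_2\cdot f\le -N_2+h(N_1)$ on $\mathbb{R}^n$. Assume every solution is defined and bounded on $[0,\infty)$ and that along every solution the maps $t\mapsto N_i(x(t))$ are uniformly continuous. Suppose $E:=\{x:N_1(x)=0,\ N_2(x)=0\}$ coincides with the equilibrium set $E_f:=\{x:f(x)=0\}$, and every equilibrium is Lyapunov stable. Then every solution converges to a single equilibrium in $E$ (its $\omega$-limit set is a singleton in $E$), and each equilibrium is semistable.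
   Context: A point $z$ is Lyapunov stable if for every neighborhood $U$ of $z$ there is a neighborhood $V\subset U$ of $z$ such that every solution starting in $V$ remains in $U$ for all $t\ge0$. An equilibrium $\bar x\in E_f$ is semistable if it is Lyapunov stable and there exists $\delta>0$ such that every solution with $\|x(0)-\bar x\|\le\delta$ converges to some (possibly different) Lyapunov stable equilibrium in $E_f$. *)

theory Defs
  imports "HOL-Analysis.Analysis"
begin

definition is_solution :: "(real^'n \<Rightarrow> real^'n) \<Rightarrow> (real \<Rightarrow> real^'n) \<Rightarrow> bool" where
  "is_solution f x \<longleftrightarrow>
     (\<forall>t\<ge>0. (x has_vector_derivative f (x t)) (at t within {0..}))"

definition equilibria :: "(real^'n \<Rightarrow> real^'n) \<Rightarrow> (real^'n) set" where
  "equilibria f = {z. f z = 0}"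

definition lyapunov_stable :: "(real^'n \<Rightarrow> real^'n) \<Rightarrow> real^'n \<Rightarrow> bool" where
  "lyapunov_stable f z \<longleftrightarrow>
     (\<forall>U. open U \<and> z \<in> U \<longrightarrow>
        (\<exists>V. open V \<and> z \<in> V \<and> V \<subseteq> U \<and>
           (\<forall>x. is_solution f x \<and> x 0 \<in> V \<longrightarrow> (\<forall>t\<ge>0. x t \<in> U))))"

definition semistable :: "(real^'n \<Rightarrow> real^'n) \<Rightarrow> real^'n \<Rightarrow> bool" where
  "semistable f z \<longleftrightarrow> z \<in> equilibria f \<and> lyapunov_stable f z \<and>
     (\<exists>\<delta>>0. \<forall>x. is_solution f x \<and> norm (x 0 - z) \<le> \<delta> \<longrightarrow>
        (\<exists>e \<in> equilibria f. lyapunov_stable f e \<and> (x \<longlongrightarrow> e) at_top))"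

definition omega_limit :: "(real \<Rightarrow> real^'n) \<Rightarrow> (real^'n) set" where
  "omega_limit x = {p. \<exists>s::nat \<Rightarrow> real. filterlim s at_top sequentially \<and> (\<forall>k. s k \<ge> 0) \<and>
                        (\<lambda>k. x (s k)) \<longlonglongrightarrow> p}"

end

theory Submission
  imports Defs
begin

text \<open>Barbalat's lemma applied to V1 along a solution gives N1(x(t)) \<rightarrow> 0. Since
  h(r) \<le> c r for some c \<ge> 0, the function V2 + c V1 satisfies
  \<nabla>(V2 + c V1) \<cdot> f \<le> -N2, so the same argument gives N2(x(t)) \<rightarrow> 0. Hence the
  \<omega>-limit set of a solution, nonempty by boundedness, lies in E = E_f. A Lyapunov stable
  \<omega>-limit point traps the solution once the solution comes close to it, so the solution
  converges to it.\<close>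

lemma mvt_dissipation_bound:
  fixes g g' M :: "real \<Rightarrow> real"
  assumes deriv: "\<And>t. t \<ge> 0 \<Longrightarrow> (g has_real_derivative g' t) (at t within {0..})"
    and dissip: "\<And>t. t \<ge> 0 \<Longrightarrow> g' t \<le> - M t"
    and "0 \<le> a" "a \<le> b"
  shows "\<exists>\<xi>\<in>{a..b}. g b - g a \<le> - (b - a) * M \<xi>"
proof -
  have "\<exists>\<xi>\<in>{a..b}. g b - g a = g' \<xi> * (b - a)"
  proof (rule mvt_very_simple[OF \<open>a \<le> b\<close>])
    fix t assume "a \<le> t" "t \<le> b"
    with \<open>0 \<le> a\<close> have "(g has_real_derivative g' t) (at t within {a..b})"
      by (auto intro: DERIV_subset[OF deriv])
    then show "(g has_derivative (*) (g' t)) (at t within {a..b})"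
      by (rule has_field_derivative_imp_has_derivative)
  qed
  then obtain \<xi> where \<xi>: "\<xi> \<in> {a..b}" "g b - g a = g' \<xi> * (b - a)" by blast
  have "g' \<xi> * (b - a) \<le> - M \<xi> * (b - a)"
    using dissip[of \<xi>] \<xi>(1) assms(3,4) by (intro mult_right_mono) auto
  with \<xi> show ?thesis by (metis mult.commute mult_minus_left)
qed

lemma Barbalat_tendsto_zero:
  fixes g g' M :: "real \<Rightarrow> real"
  assumes deriv: "\<And>t. t \<ge> 0 \<Longrightarrow> (g has_real_derivative g' t) (at t within {0..})"
    and dissip: "\<And>t. t \<ge> 0 \<Longrightarrow> g' t \<le> - M t"
    and M_nonneg: "\<And>t. t \<ge> 0 \<Longrightarrow> M t \<ge> 0"
    and M_uc: "uniformly_continuous_on {0..} M"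
    and g_bdd: "bdd_below (g ` {0..})"
  shows "(M \<longlongrightarrow> 0) at_top"
  unfolding tendsto_iff
proof (intro allI impI)
  fix \<epsilon> :: real assume "\<epsilon> > 0"
  have mvt: "\<exists>\<xi>\<in>{a..b}. g b - g a \<le> - (b - a) * M \<xi>" if "0 \<le> a" "a \<le> b" for a b
    using mvt_dissipation_bound[OF deriv dissip that] .
  have antimono: "g b \<le> g a" if ab: "0 \<le> a" "a \<le> b" for a b
  proof -
    obtain \<xi> where "\<xi> \<in> {a..b}" "g b - g a \<le> - (b - a) * M \<xi>" using mvt[OF ab] by blast
    moreover have "(b - a) * M \<xi> \<ge> 0" using M_nonneg[of \<xi>] ab calculation(1) by auto
    ultimately show ?thesis by linarith
  qed
  obtain d where d: "d > 0"
    "\<forall>t\<in>{0..}. \<forall>s\<in>{0..}. dist s t < d \<longrightarrow> dist (M s) (M t) < \<epsilon>/2"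
    using M_uc \<open>\<epsilon> > 0\<close> unfolding uniformly_continuous_on_def by (meson half_gt_zero)
  define L where "L = Inf (g ` {0..})"
  obtain T where T: "T \<ge> 0" "g T < L + d/2 * (\<epsilon>/2)"
    using cInf_lessD[of "g ` {0..}" "L + d/2 * (\<epsilon>/2)"] d(1) \<open>\<epsilon> > 0\<close>
    unfolding L_def by fastforce
  text \<open>After T, g is nonincreasing and within d \<epsilon>/4 of its infimum, whereas M t \<ge> \<epsilon>
    would give M \<ge> \<epsilon>/2 on [t, t + d/2] and hence a drop of g by at least d \<epsilon>/4.\<close>
  have "dist (M t) 0 < \<epsilon>" if tT: "t \<ge> T" for t
  proof (rule ccontr)
    assume "\<not> dist (M t) 0 < \<epsilon>"
    then have "M t \<ge> \<epsilon>" using M_nonneg[of t] T tT by auto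
    obtain \<xi> where \<xi>: "\<xi> \<in> {t..t + d/2}" "g (t + d/2) - g t \<le> - (d/2) * M \<xi>"
      using mvt[of t "t + d/2"] T tT d(1) by auto
    have "dist (M \<xi>) (M t) < \<epsilon>/2"
      using d \<xi>(1) T tT by (auto simp: dist_real_def)
    with \<open>M t \<ge> \<epsilon>\<close> have "M \<xi> \<ge> \<epsilon>/2" unfolding dist_real_def by linarith
    then have "(d/2) * (\<epsilon>/2) \<le> (d/2) * M \<xi>" using d(1) by (intro mult_left_mono) auto
    moreover have "g t \<le> g T" using antimono T tT by auto
    moreover have "L \<le> g (t + d/2)"
      unfolding L_def using g_bdd T tT d(1) by (intro cInf_lower) auto
    ultimately show False using \<xi>(2) T(2) by linarith
  qed
  then show "\<forall>\<^sub>F t in at_top. dist (M t) 0 < \<epsilon>"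
    unfolding eventually_at_top_linorder by blast
qed

lemma is_solution_shift:
  assumes "is_solution f x" "s \<ge> 0"
  shows "is_solution f (\<lambda>t. x (t + s))"
  unfolding is_solution_def
proof (intro allI impI)
  fix t :: real assume "t \<ge> 0"
  have shift: "((\<lambda>t. t + s) has_vector_derivative 1) (at t within {0..})"
    by (auto intro!: derivative_eq_intros)
  have "(x has_vector_derivative f (x (t + s))) (at (t + s) within (\<lambda>t. t + s) ` {0..})"
    using assms \<open>t \<ge> 0\<close> unfolding is_solution_def
    by (auto intro: has_vector_derivative_within_subset[of _ _ _ "{0..}"])
  from vector_diff_chain_within[OF shift this]
  show "((\<lambda>t. x (t + s)) has_vector_derivative f (x (t + s))) (at t within {0..})"
    by (simp add: o_def)
qed

lemma has_real_derivative_along_solution: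
  assumes "is_solution f x" "\<And>z. (V has_derivative (\<lambda>v. DV z \<bullet> v)) (at z)" "t \<ge> 0"
  shows "((\<lambda>t. V (x t)) has_real_derivative DV (x t) \<bullet> f (x t)) (at t within {0..})"
proof -
  have "(x has_derivative (\<lambda>h. h *\<^sub>R f (x t))) (at t within {0..})"
    using assms(1,3) unfolding is_solution_def has_vector_derivative_def by auto
  from diff_chain_within[OF this has_derivative_at_withinI[OF assms(2)]]
  show ?thesis
    by (simp add: has_field_derivative_def o_def mult_commute_abs)
qed

lemma bdd_below_continuous_image_bounded:
  fixes V :: "'a::heine_borel \<Rightarrow> real"
  assumes "continuous_on UNIV V" "bounded S"
  shows "bdd_below (V ` S)"
proof -
  have "compact (closure S)" using assms(2) by (simp add: compact_closure)
  with continuous_on_subset[OF assms(1) subset_UNIV] have "compact (V ` closure S)"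
    by (rule compact_continuous_image)
  then have "bdd_below (V ` closure S)"
    by (intro bounded_imp_bdd_below compact_imp_bounded)
  then show ?thesis
    by (rule bdd_below_mono) (use closure_subset in blast)
qed

lemma solution_dissipation_tendsto_zero:
  assumes sol: "is_solution f x" and bdd: "bounded (x ` {0..})"
    and V_deriv: "\<And>z. (V has_derivative (\<lambda>v. DV z \<bullet> v)) (at z)"
    and dissip: "\<And>z. DV z \<bullet> f z \<le> - N z" and N_nonneg: "\<And>z. N z \<ge> 0"
    and N_uc: "uniformly_continuous_on {0..} (\<lambda>t. N (x t))"
  shows "((\<lambda>t. N (x t)) \<longlongrightarrow> 0) at_top"
proof (rule Barbalat_tendsto_zero[where g = "\<lambda>t. V (x t)" and g' = "\<lambda>t. DV (x t) \<bullet> f (x t)"])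
  show "((\<lambda>t. V (x t)) has_real_derivative DV (x t) \<bullet> f (x t)) (at t within {0..})"
    if "t \<ge> 0" for t
    using sol V_deriv that by (rule has_real_derivative_along_solution)
  have "continuous_on UNIV V"
    using V_deriv has_derivative_continuous continuous_at_imp_continuous_on by blast
  from bdd_below_continuous_image_bounded[OF this bdd]
  show "bdd_below ((\<lambda>t. V (x t)) ` {0..})" by (simp add: image_image)
qed (use dissip N_nonneg N_uc in simp_all)

lemma omega_limit_nonempty:
  assumes "bounded (x ` {0..})"
  shows "omega_limit x \<noteq> {}"
proof -
  have "bounded (range (\<lambda>k::nat. x (real k)))"
    using assms by (rule bounded_subset) auto
  then obtain p r where "strict_mono r" "((\<lambda>k. x (real k)) \<circ> r) \<longlonglongrightarrow> p"
    using bounded_imp_convergent_subsequence by blast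
  moreover have "filterlim (\<lambda>k. real (r k)) at_top sequentially"
    using filterlim_compose[OF filterlim_real_sequentially filterlim_subseq[OF \<open>strict_mono r\<close>]]
    by (simp add: o_def)
  ultimately have "p \<in> omega_limit x"
    unfolding omega_limit_def by (auto simp: o_def)
  then show ?thesis by blast
qed

lemma omega_limit_value_of_tendsto:
  fixes N :: "real^'n \<Rightarrow> 'b::t2_space"
  assumes "((\<lambda>t. N (x t)) \<longlongrightarrow> c) at_top" "p \<in> omega_limit x" "isCont N p"
  shows "N p = c"
proof -
  obtain s where s: "filterlim s at_top sequentially" "(\<lambda>k. x (s k)) \<longlonglongrightarrow> p"
    using assms(2) unfolding omega_limit_def by blast
  have "(\<lambda>k. N (x (s k))) \<longlonglongrightarrow> N p"
    by (rule isCont_tendsto_compose[OF assms(3) s(2)])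
  moreover have "(\<lambda>k. N (x (s k))) \<longlonglongrightarrow> c"
    using filterlim_compose[OF assms(1) s(1)] by (simp add: o_def)
  ultimately show ?thesis by (rule LIMSEQ_unique)
qed

lemma tendsto_omega_limit_point_if_lyapunov_stable:
  assumes sol: "is_solution f x" and "p \<in> omega_limit x" and "lyapunov_stable f p"
  shows "(x \<longlongrightarrow> p) at_top"
  unfolding tendsto_def
proof (intro allI impI)
  fix U assume "open U" "p \<in> U"
  then obtain V where V: "open V" "p \<in> V"
    "\<forall>y. is_solution f y \<and> y 0 \<in> V \<longrightarrow> (\<forall>t\<ge>0. y t \<in> U)"
    using \<open>lyapunov_stable f p\<close> unfolding lyapunov_stable_def by blast
  obtain s where s: "filterlim s at_top sequentially" "\<forall>k. s k \<ge> 0" "(\<lambda>k. x (s k)) \<longlonglongrightarrow> p"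
    using \<open>p \<in> omega_limit x\<close> unfolding omega_limit_def by blast
  obtain k where "x (s k) \<in> V"
    using topological_tendstoD[OF s(3) V(1,2)] unfolding eventually_sequentially by blast
  moreover have "is_solution f (\<lambda>t. x (t + s k))"
    using sol s(2) by (simp add: is_solution_shift)
  ultimately have "\<forall>t\<ge>0. x (t + s k) \<in> U"
    using V(3)[THEN spec[of _ "\<lambda>t. x (t + s k)"]] by simp
  then have "\<forall>t\<ge>s k. x t \<in> U"
    by (metis diff_add_cancel diff_ge_0_iff_ge)
  then show "\<forall>\<^sub>F t in at_top. x t \<in> U"
    unfolding eventually_at_top_linorder by blast
qed

lemma tendsto_imp_omega_limit_eq:
  assumes "(x \<longlongrightarrow> p) at_top"
  shows "omega_limit x = {p}"
proof
  show "omega_limit x \<subseteq> {p}"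
  proof
    fix q assume "q \<in> omega_limit x"
    then obtain s where s: "filterlim s at_top sequentially" "(\<lambda>k. x (s k)) \<longlonglongrightarrow> q"
      unfolding omega_limit_def by blast
    have "(\<lambda>k. x (s k)) \<longlonglongrightarrow> p"
      using filterlim_compose[OF assms s(1)] by (simp add: o_def)
    with s(2) show "q \<in> {p}" using LIMSEQ_unique by auto
  qed
  have "(\<lambda>k. x (real k)) \<longlonglongrightarrow> p"
    using filterlim_compose[OF assms filterlim_real_sequentially] by (simp add: o_def)
  then show "{p} \<subseteq> omega_limit x"
    unfolding omega_limit_def using filterlim_real_sequentially by auto
qed

lemma solution_converges_if_omega_limit_stable:
  assumes sol: "is_solution f x" and "bounded (x ` {0..})"
    and "omega_limit x \<subseteq> S" and "\<And>p. p \<in> S \<Longrightarrow> lyapunov_stable f p"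
  shows "\<exists>p\<in>S. (x \<longlongrightarrow> p) at_top \<and> omega_limit x = {p}"
proof -
  obtain p where p: "p \<in> omega_limit x"
    using omega_limit_nonempty[OF \<open>bounded (x ` {0..})\<close>] by blast
  with assms(3,4) have "p \<in> S" "lyapunov_stable f p" by auto
  with tendsto_omega_limit_point_if_lyapunov_stable[OF sol p]
  show ?thesis by (auto dest: tendsto_imp_omega_limit_eq)
qed

lemma semistable_if_solutions_converge:
  assumes "z \<in> equilibria f"
    and stable: "\<And>e. e \<in> equilibria f \<Longrightarrow> lyapunov_stable f e"
    and converge: "\<And>x. is_solution f x \<Longrightarrow> \<exists>e\<in>equilibria f. (x \<longlongrightarrow> e) at_top"
  shows "semistable f z"
  unfolding semistable_def
proof (intro conjI exI[of _ "1::real"] allI impI)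
  fix x assume "is_solution f x \<and> norm (x 0 - z) \<le> 1"
  with converge stable show "\<exists>e\<in>equilibria f. lyapunov_stable f e \<and> (x \<longlongrightarrow> e) at_top"
    by blast
qed (use assms in auto)

lemma linear_bound_of_bdd_above_ratio:
  fixes h :: "real \<Rightarrow> real"
  assumes "h 0 = 0" "bdd_above ((\<lambda>r. h r / r) ` {0<..})"
  obtains c where "c \<ge> 0" "\<And>r. r \<ge> 0 \<Longrightarrow> h r \<le> c * r"
proof -
  obtain C where C: "\<And>r. r > 0 \<Longrightarrow> h r / r \<le> C"
    using assms(2) unfolding bdd_above_def by auto
  have "h r \<le> max C 0 * r" if "r \<ge> 0" for r
  proof (cases "r = 0")
    case False
    with that have "r > 0" by simp
    with C[of r] have "h r / r \<le> max C 0" by linarith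
    with \<open>r > 0\<close> show ?thesis by (simp add: divide_le_eq mult.commute)
  qed (simp add: assms(1))
  with that[of "max C 0"] show thesis by simp
qed

lemma combined_lyapunov_dissipation:
  fixes c :: real
  assumes "c \<ge> 0" "\<And>r. r \<ge> 0 \<Longrightarrow> h r \<le> c * r" "N1 \<ge> 0"
    and "D1 \<le> - N1" "D2 \<le> - N2 + h N1"
  shows "D2 + c * D1 \<le> - N2"
proof -
  have "c * D1 \<le> c * - N1" using assms(4,1) by (rule mult_left_mono)
  with assms(2)[OF \<open>N1 \<ge> 0\<close>] \<open>D2 \<le> - N2 + h N1\<close> show ?thesis by linarith
qed

theorem corollary2p7:
  fixes f :: "real^'n \<Rightarrow> real^'n"
    and V1 V2 :: "real^'n \<Rightarrow> real"
    and DV1 DV2 :: "real^'n \<Rightarrow> real^'n"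
    and N1 N2 :: "real^'n \<Rightarrow> real"
    and h :: "real \<Rightarrow> real"
  assumes f_loclip: "local_lipschitz (UNIV::real set) UNIV (\<lambda>_. f)"
    and V1_deriv: "\<And>z. (V1 has_derivative (\<lambda>v. DV1 z \<bullet> v)) (at z)"
    and V1_C1: "continuous_on UNIV DV1"
    and V2_deriv: "\<And>z. (V2 has_derivative (\<lambda>v. DV2 z \<bullet> v)) (at z)"
    and V2_C1: "continuous_on UNIV DV2"
    and N1_cont: "continuous_on UNIV N1" and N1_nonneg: "\<And>z. N1 z \<ge> 0"
    and N2_cont: "continuous_on UNIV N2" and N2_nonneg: "\<And>z. N2 z \<ge> 0"
    and h_cont: "continuous_on {0..} h" and h_nonneg: "\<And>r. r \<ge> 0 \<Longrightarrow> h r \<ge> 0"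
    and h_zero: "h 0 = 0"
    and h_lin: "bdd_above ((\<lambda>r. h r / r) ` {0<..})"
    and dV1: "\<And>z. DV1 z \<bullet> f z \<le> - N1 z"
    and dV2: "\<And>z. DV2 z \<bullet> f z \<le> - N2 z + h (N1 z)"
    and complete: "\<And>x0. \<exists>x. is_solution f x \<and> x 0 = x0"
    and bounded_sol: "\<And>x. is_solution f x \<Longrightarrow> bounded (x ` {0..})"
    and unif1: "\<And>x. is_solution f x \<Longrightarrow> uniformly_continuous_on {0..} (\<lambda>t. N1 (x t))"
    and unif2: "\<And>x. is_solution f x \<Longrightarrow> uniformly_continuous_on {0..} (\<lambda>t. N2 (x t))"
    and E_eq: "{z. N1 z = 0 \<and> N2 z = 0} = equilibria f"
    and all_stable: "\<And>z. z \<in> equilibria f \<Longrightarrow> lyapunov_stable f z"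
  shows "(\<forall>x. is_solution f x \<longrightarrow>
            (\<exists>e \<in> {z. N1 z = 0 \<and> N2 z = 0}. (x \<longlongrightarrow> e) at_top \<and> omega_limit x = {e}))
         \<and> (\<forall>z \<in> equilibria f. semistable f z)"
proof -
  obtain c where c: "c \<ge> 0" "\<And>r. r \<ge> 0 \<Longrightarrow> h r \<le> c * r"
    using linear_bound_of_bdd_above_ratio[OF h_zero h_lin] by blast
  have W_deriv: "((\<lambda>z. V2 z + c * V1 z) has_derivative (\<lambda>v. (DV2 z + c *\<^sub>R DV1 z) \<bullet> v)) (at z)"
    for z
    using has_derivative_add[OF V2_deriv has_derivative_scaleR_right[OF V1_deriv, of c]]
    by (simp add: inner_add_left algebra_simps)
  have dW: "(DV2 z + c *\<^sub>R DV1 z) \<bullet> f z \<le> - N2 z" for z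
    using combined_lyapunov_dissipation[OF c N1_nonneg[of z] dV1[of z] dV2[of z]]
    by (simp add: inner_add_left)
  have converges: "\<exists>e \<in> {z. N1 z = 0 \<and> N2 z = 0}. (x \<longlongrightarrow> e) at_top \<and> omega_limit x = {e}"
    if sol: "is_solution f x" for x
  proof (rule solution_converges_if_omega_limit_stable[OF sol bounded_sol[OF sol]])
    have N1_lim: "((\<lambda>t. N1 (x t)) \<longlongrightarrow> 0) at_top"
      by (rule solution_dissipation_tendsto_zero[OF sol bounded_sol[OF sol] V1_deriv dV1
            N1_nonneg unif1[OF sol]])
    have N2_lim: "((\<lambda>t. N2 (x t)) \<longlongrightarrow> 0) at_top"
      by (rule solution_dissipation_tendsto_zero[OF sol bounded_sol[OF sol] W_deriv dW
            N2_nonneg unif2[OF sol]])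
    show "omega_limit x \<subseteq> {z. N1 z = 0 \<and> N2 z = 0}"
      using omega_limit_value_of_tendsto[OF N1_lim] omega_limit_value_of_tendsto[OF N2_lim]
        N1_cont N2_cont
      by (auto simp: continuous_on_eq_continuous_at)
  qed (use E_eq all_stable in auto)
  then have "\<exists>e\<in>equilibria f. (x \<longlongrightarrow> e) at_top" if "is_solution f x" for x
    using that unfolding E_eq by blast
  with all_stable have "semistable f z" if "z \<in> equilibria f" for z
    using that by (intro semistable_if_solutions_converge) auto
  with converges show ?thesis by blast
qed

end
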